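(* Let $L\in\mathcal{N}$ and assume that $L$ has no doubly reducible elements. Then there do not exist twelve distinct elements $x',x,b,z,z',w',w,a,s,y,y',c\in L$ such that the subposet of $L$ they form is the poset whose order is generated by the relations $$x'<x<b<z<z',\quad w'<w<a<s<y<y',\quad w'<x',\ w<x,\ a<c<b,\ y<z,\ y'<z'$$ (i.e. its Hasse diagram consists of exactly these covering relations), and such that the sublattice of $L$ generated by $\{x',x,b,z,z',w',w,a,y,y'\}$ is isomorphic to $\mathbf{2}\times\mathbf{5}$ (with $x'<x<b<z<z'$ and $w'<w<a<y<y'$ the two five-element chains and $w'<x'$, $w<x$, $a<b$, $y<z$, $y'<z'$ the rungs).
   Context: $\mathcal{N}$ denotes the variety of lattices generated by the pentagon $N_5$. For elements $u,v$, $u\parallel v$ means neither $u\le v$ nor $v\le u$. An element $e$ of a lattice $L$ is doubly reducible if there exist $e_1,e_2,e_3,e_4\in L$ with $e_1\parallel e_2$, $e_3\parallel e_4$ and $e=e_1\vee e_2=e_3\wedge e_4$. $\mathbf{n}$ denotes the $n$-element chain and $\times$ the direct product of posets. *)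

theory Defs
  imports Main
begin

datatype lterm = LVar nat | LJoin lterm lterm | LMeet lterm lterm

primrec eval_lterm :: "(nat \<Rightarrow> 'a::lattice) \<Rightarrow> lterm \<Rightarrow> 'a" where
  "eval_lterm \<sigma> (LVar i) = \<sigma> i"
| "eval_lterm \<sigma> (LJoin s t) = sup (eval_lterm \<sigma> s) (eval_lterm \<sigma> t)"
| "eval_lterm \<sigma> (LMeet s t) = inf (eval_lterm \<sigma> s) (eval_lterm \<sigma> t)"

text \<open>The pentagon N5 on carrier {0..4}: 0 = bottom, 1 < 2, 3 incomparable to 1 and 2, 4 = top.\<close>

definition n5_le :: "nat \<Rightarrow> nat \<Rightarrow> bool" where
  "n5_le x y \<longleftrightarrow> x = y \<or> x = 0 \<or> y = 4 \<or> (x = 1 \<and> y = 2)"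

definition n5_join :: "nat \<Rightarrow> nat \<Rightarrow> nat" where
  "n5_join x y = (if n5_le x y then y else if n5_le y x then x else 4)"

definition n5_meet :: "nat \<Rightarrow> nat \<Rightarrow> nat" where
  "n5_meet x y = (if n5_le x y then x else if n5_le y x then y else 0)"

primrec eval_n5 :: "(nat \<Rightarrow> nat) \<Rightarrow> lterm \<Rightarrow> nat" where
  "eval_n5 \<rho> (LVar i) = \<rho> i"
| "eval_n5 \<rho> (LJoin s t) = n5_join (eval_n5 \<rho> s) (eval_n5 \<rho> t)"
| "eval_n5 \<rho> (LMeet s t) = n5_meet (eval_n5 \<rho> s) (eval_n5 \<rho> t)"

definition n5_satisfies :: "lterm \<Rightarrow> lterm \<Rightarrow> bool" where
  "n5_satisfies s t \<longleftrightarrow> (\<forall>\<rho>. (\<forall>i. \<rho> i \<le> 4) \<longrightarrow> eval_n5 \<rho> s = eval_n5 \<rho> t)"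

text \<open>A lattice (type) belongs to the variety \<N> generated by N5 iff it satisfies
  every lattice identity that holds in N5 (Birkhoff).\<close>
definition in_var_N5 :: "'a::lattice itself \<Rightarrow> bool" where
  "in_var_N5 _ \<longleftrightarrow> (\<forall>s t. n5_satisfies s t \<longrightarrow> (\<forall>\<sigma>::nat \<Rightarrow> 'a. eval_lterm \<sigma> s = eval_lterm \<sigma> t))"

definition incomparable :: "'a::order \<Rightarrow> 'a \<Rightarrow> bool" where
  "incomparable u v \<longleftrightarrow> \<not> u \<le> v \<and> \<not> v \<le> u"

definition doubly_reducible :: "'a::lattice \<Rightarrow> bool" where
  "doubly_reducible e \<longleftrightarrow> (\<exists>e1 e2 e3 e4. incomparable e1 e2 \<and> incomparable e3 e4 \<and>
      e = sup e1 e2 \<and> e = inf e3 e4)"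

inductive_set lat_gen :: "'a::lattice set \<Rightarrow> 'a set" for S where
  gen_base: "x \<in> S \<Longrightarrow> x \<in> lat_gen S"
| gen_sup: "x \<in> lat_gen S \<Longrightarrow> y \<in> lat_gen S \<Longrightarrow> sup x y \<in> lat_gen S"
| gen_inf: "x \<in> lat_gen S \<Longrightarrow> y \<in> lat_gen S \<Longrightarrow> inf x y \<in> lat_gen S"

text \<open>Indices: x'=0, x=1, b=2, z=3, z'=4, w'=5, w=6, a=7, s=8, y=9, y'=10, c=11.
  The order of the poset is the reflexive-transitive closure of these relations.\<close>
definition P12_gen :: "(nat \<times> nat) set" where
  "P12_gen = {(0,1),(1,2),(2,3),(3,4),
              (5,6),(6,7),(7,8),(8,9),(9,10),
              (5,0),(6,1),(7,11),(11,2),(9,3),(10,4)}"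

definition P12_le :: "nat \<Rightarrow> nat \<Rightarrow> bool" where
  "P12_le i j \<longleftrightarrow> (i, j) \<in> P12_gen\<^sup>*"

text \<open>The lattice 2 x 5 on {0,1} x {0..4} with componentwise order.\<close>
definition two_by_five :: "(nat \<times> nat) set" where
  "two_by_five = {0..1} \<times> {0..4}"

end

theory Submission
  imports Defs
begin

text \<open>
  Lattices in \<N> need be neither modular nor semidistributive, but some instances of these laws
  survive: a quasi-identity that holds in N5 and whose hypotheses can be absorbed into lattice
  terms becomes an identity of N5, verified by evaluating all assignments of four variables, and
  therefore holds in \<N>. In the configuration of the theorem these laws give a doubly reducible
  element in each of three cases:
  if x \<sqinter> c \<le> w then y \<squnion> (b \<sqinter> (y' \<squnion> c)) = z \<sqinter> (y' \<squnion> c);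
  if x \<le> s \<squnion> c then w \<squnion> (x' \<sqinter> c) = x \<sqinter> (a \<squnion> (x' \<sqinter> c));
  otherwise a \<squnion> (x \<sqinter> (s \<squnion> c)) = b \<sqinter> (s \<squnion> (x \<sqinter> c)).
\<close>

primrec lterm_vars :: "lterm \<Rightarrow> nat set" where
  "lterm_vars (LVar i) = {i}"
| "lterm_vars (LJoin s t) = lterm_vars s \<union> lterm_vars t"
| "lterm_vars (LMeet s t) = lterm_vars s \<union> lterm_vars t"

lemma eval_n5_cong:
  "(\<And>i. i \<in> lterm_vars s \<Longrightarrow> \<rho> i = \<rho>' i) \<Longrightarrow> eval_n5 \<rho> s = eval_n5 \<rho>' s"
  by (induction s) auto

lemma n5_satisfies_if_4vars:
  assumes "lterm_vars s \<subseteq> {0..3}" "lterm_vars t \<subseteq> {0..3}"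
    and "\<forall>a\<le>4. \<forall>b\<le>4. \<forall>c\<le>4. \<forall>d\<le>4.
           eval_n5 ((!) [a, b, c, d]) s = eval_n5 ((!) [a, b, c, d]) t"
  shows "n5_satisfies s t"
  unfolding n5_satisfies_def
proof (intro allI impI)
  fix \<rho> :: "nat \<Rightarrow> nat"
  assume "\<forall>i. \<rho> i \<le> 4"
  define \<rho>' where "\<rho>' = (!) [\<rho> 0, \<rho> 1, \<rho> 2, \<rho> 3]"
  have agree: "\<rho> i = \<rho>' i" if "i \<in> {0..3}" for i
  proof -
    have "i = 0 \<or> i = 1 \<or> i = 2 \<or> i = 3" using that by auto
    then show ?thesis by (auto simp: \<rho>'_def)
  qed
  have "eval_n5 \<rho> s = eval_n5 \<rho>' s"
    using assms(1) agree by (intro eval_n5_cong) blast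
  also have "\<dots> = eval_n5 \<rho>' t"
    using assms(3) \<open>\<forall>i. \<rho> i \<le> 4\<close> unfolding \<rho>'_def by blast
  also have "\<dots> = eval_n5 \<rho> t"
    using assms(2) agree by (intro eval_n5_cong[symmetric]) blast
  finally show "eval_n5 \<rho> s = eval_n5 \<rho> t" .
qed

lemma n5_join_meet_table:
  "n5_join 0 0 = 0" "n5_join 0 1 = 1" "n5_join 0 2 = 2" "n5_join 0 3 = 3" "n5_join 0 4 = 4"
  "n5_join 1 0 = 1" "n5_join 1 1 = 1" "n5_join 1 2 = 2" "n5_join 1 3 = 4" "n5_join 1 4 = 4"
  "n5_join 2 0 = 2" "n5_join 2 1 = 2" "n5_join 2 2 = 2" "n5_join 2 3 = 4" "n5_join 2 4 = 4"
  "n5_join 3 0 = 3" "n5_join 3 1 = 4" "n5_join 3 2 = 4" "n5_join 3 3 = 3" "n5_join 3 4 = 4"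
  "n5_join 4 0 = 4" "n5_join 4 1 = 4" "n5_join 4 2 = 4" "n5_join 4 3 = 4" "n5_join 4 4 = 4"
  "n5_meet 0 0 = 0" "n5_meet 0 1 = 0" "n5_meet 0 2 = 0" "n5_meet 0 3 = 0" "n5_meet 0 4 = 0"
  "n5_meet 1 0 = 0" "n5_meet 1 1 = 1" "n5_meet 1 2 = 1" "n5_meet 1 3 = 0" "n5_meet 1 4 = 1"
  "n5_meet 2 0 = 0" "n5_meet 2 1 = 1" "n5_meet 2 2 = 2" "n5_meet 2 3 = 0" "n5_meet 2 4 = 2"
  "n5_meet 3 0 = 0" "n5_meet 3 1 = 0" "n5_meet 3 2 = 0" "n5_meet 3 3 = 3" "n5_meet 3 4 = 3"
  "n5_meet 4 0 = 0" "n5_meet 4 1 = 1" "n5_meet 4 2 = 2" "n5_meet 4 3 = 3" "n5_meet 4 4 = 4"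
  by (simp_all add: n5_join_def n5_meet_def n5_le_def)

text \<open>The simplifier rewrites \<open>1 :: nat\<close> to \<open>Suc 0\<close>, so the table is used in that form.\<close>
lemmas n5_join_meet_table_Suc = n5_join_meet_table[unfolded One_nat_def]

lemma all_le4_nat: "(\<forall>a\<le>4::nat. P a) \<longleftrightarrow> P 0 \<and> P 1 \<and> P 2 \<and> P 3 \<and> P 4"
  by (auto simp: le_Suc_eq numeral_eq_Suc)

lemma in_var_N5_le_if_4vars:
  assumes "in_var_N5 TYPE('a::lattice)"
    and "lterm_vars s \<subseteq> {0..3}" "lterm_vars t \<subseteq> {0..3}"
    and "\<forall>a\<le>4. \<forall>b\<le>4. \<forall>c\<le>4. \<forall>d\<le>4.
           eval_n5 ((!) [a, b, c, d]) (LMeet s t) = eval_n5 ((!) [a, b, c, d]) s"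
  shows "eval_lterm (\<sigma> :: nat \<Rightarrow> 'a) s \<le> eval_lterm \<sigma> t"
proof -
  have "n5_satisfies (LMeet s t) s"
    using assms(2-4) by (intro n5_satisfies_if_4vars) auto
  then have "eval_lterm \<sigma> (LMeet s t) = eval_lterm \<sigma> s"
    using assms(1) unfolding in_var_N5_def by blast
  then show ?thesis by (simp add: le_iff_inf)
qed

lemma N5_var_meet_semidistrib_above:
  fixes u v q p :: "'a::lattice"
  assumes N5: "in_var_N5 TYPE('a)"
    and "p \<le> u" "p \<le> v" "p \<le> q" "inf u v \<le> p" "inf u q \<le> p"
  shows "inf u (sup v q) \<le> p"
proof -
  define g where "g r = LJoin (LJoin r (LMeet (LJoin (LVar 0) r) (LJoin (LVar 1) r)))
                           (LMeet (LJoin (LVar 0) r) (LJoin (LVar 2) r))" for r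
  define pr where "pr = g (g (LVar 3))"
  define X where "X = LMeet (LJoin (LVar 0) pr) (LJoin (LJoin (LVar 1) pr) (LJoin (LVar 2) pr))"
  have "eval_lterm ((!) [u, v, q, p]) X \<le> eval_lterm ((!) [u, v, q, p]) pr"
    by (rule in_var_N5_le_if_4vars[OF N5], simp_all only: all_le4_nat)
       (simp_all add: X_def pr_def g_def n5_join_meet_table_Suc)
  moreover have "eval_lterm ((!) [u, v, q, p]) (g r) = p" if "eval_lterm ((!) [u, v, q, p]) r = p" for r
    using that assms by (simp add: g_def sup_absorb1 sup_absorb2 le_supI1 inf.coboundedI1)
  ultimately show ?thesis
    using assms by (simp add: X_def pr_def sup_absorb1 sup_absorb2)
qed

lemma N5_var_weak_modular_join:
  fixes y y\<^sub>1 b c :: "'a::lattice"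
  assumes N5: "in_var_N5 TYPE('a)"
    and "y \<le> y\<^sub>1" "c \<le> b" "inf (sup b y) y\<^sub>1 = y"
  shows "inf (sup b y) (sup y\<^sub>1 c) \<le> sup y (inf b (sup y\<^sub>1 c))"
proof -
  define f where "f = LMeet (LJoin (LVar 2) (LVar 0)) (LJoin (LVar 1) (LVar 0))"
  define X where "X = LMeet (LJoin (LVar 2) f) (LJoin (LJoin (LVar 1) f) (LMeet (LVar 3) (LVar 2)))"
  define Y where "Y = LJoin f (LMeet (LVar 2) (LJoin (LJoin (LVar 1) f) (LMeet (LVar 3) (LVar 2))))"
  have "eval_lterm ((!) [y, y\<^sub>1, b, c]) X \<le> eval_lterm ((!) [y, y\<^sub>1, b, c]) Y"
    by (rule in_var_N5_le_if_4vars[OF N5], simp_all only: all_le4_nat)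
       (simp_all add: X_def Y_def f_def n5_join_meet_table_Suc)
  moreover have "eval_lterm ((!) [y, y\<^sub>1, b, c]) f = y"
    using assms by (simp add: f_def sup_absorb1)
  ultimately show ?thesis
    using assms by (simp add: X_def Y_def sup_absorb1 inf_absorb1)
qed

lemma N5_var_weak_modular_meet:
  fixes x\<^sub>1 w a c :: "'a::lattice"
  assumes N5: "in_var_N5 TYPE('a)"
    and "w \<le> a" "a \<le> c" "inf (sup x\<^sub>1 w) a = w"
  shows "inf (sup x\<^sub>1 w) (sup a (inf x\<^sub>1 c)) \<le> sup w (inf x\<^sub>1 c)"
proof -
  define f where "f = LMeet (LJoin (LVar 0) (LVar 1)) (LJoin (LVar 2) (LVar 1))"
  define Y where "Y = LJoin f (LMeet (LVar 0) (LJoin (LVar 3) (LJoin (LVar 2) f)))"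
  define X where "X = LMeet (LJoin (LVar 0) f)
                            (LJoin (LJoin (LVar 2) f) (LMeet (LVar 0) (LJoin (LVar 3) (LJoin (LVar 2) f))))"
  have "eval_lterm ((!) [x\<^sub>1, w, a, c]) X \<le> eval_lterm ((!) [x\<^sub>1, w, a, c]) Y"
    by (rule in_var_N5_le_if_4vars[OF N5], simp_all only: all_le4_nat)
       (simp_all add: X_def Y_def f_def n5_join_meet_table_Suc)
  moreover have "eval_lterm ((!) [x\<^sub>1, w, a, c]) f = w"
    using assms by (simp add: f_def sup_absorb1)
  ultimately show ?thesis
    using assms by (simp add: X_def Y_def sup_absorb1 sup_absorb2)
qed

lemma N5_var_weak_modular_decomp:
  fixes b s x c :: "'a::lattice"
  assumes N5: "in_var_N5 TYPE('a)" and "sup x (inf b s) = b"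
  shows "inf b (sup s (inf x c)) \<le> sup (inf b s) (inf x (sup s c))"
proof -
  define B where "B = LJoin (LVar 2) (LMeet (LVar 0) (LVar 1))"
  define X where "X = LMeet B (LJoin (LVar 1) (LMeet (LVar 2) (LVar 3)))"
  define Y where "Y = LJoin (LMeet B (LVar 1)) (LMeet (LVar 2) (LJoin (LVar 1) (LVar 3)))"
  have "eval_lterm ((!) [b, s, x, c]) X \<le> eval_lterm ((!) [b, s, x, c]) Y"
    by (rule in_var_N5_le_if_4vars[OF N5], simp_all only: all_le4_nat)
       (simp_all add: X_def Y_def B_def n5_join_meet_table_Suc)
  then show ?thesis
    using assms by (simp add: X_def Y_def B_def)
qed

lemma N5_var_weak_distrib:
  fixes b s x c :: "'a::lattice"
  assumes N5: "in_var_N5 TYPE('a)" and "x \<le> b" "inf b s \<le> c"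
  shows "sup (inf b s) (inf x (sup s c)) \<le> inf b (sup s (inf x c))"
proof -
  define X where "X = LJoin (LMeet (LVar 0) (LVar 1))
    (LMeet (LMeet (LVar 2) (LVar 0)) (LJoin (LVar 1) (LJoin (LVar 3) (LMeet (LVar 0) (LVar 1)))))"
  define Y where "Y = LMeet (LVar 0)
    (LJoin (LVar 1) (LMeet (LMeet (LVar 2) (LVar 0)) (LJoin (LVar 3) (LMeet (LVar 0) (LVar 1)))))"
  have "eval_lterm ((!) [b, s, x, c]) X \<le> eval_lterm ((!) [b, s, x, c]) Y"
    by (rule in_var_N5_le_if_4vars[OF N5], simp_all only: all_le4_nat)
       (simp_all add: X_def Y_def n5_join_meet_table_Suc)
  then show ?thesis
    using assms by (simp add: X_def Y_def inf_absorb1 sup_absorb1)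
qed

lemma doubly_reducibleI:
  assumes "incomparable e\<^sub>1 e\<^sub>2" "incomparable e\<^sub>3 e\<^sub>4" "sup e\<^sub>1 e\<^sub>2 = inf e\<^sub>3 e\<^sub>4"
  shows "doubly_reducible (sup e\<^sub>1 e\<^sub>2)"
  using assms unfolding doubly_reducible_def by metis

locale N5_ladder =
  fixes x' x b z w' w a s y y' c :: "'a::lattice"
  assumes N5: "in_var_N5 TYPE('a)"
    and le: "x' \<le> x" "x \<le> b" "b \<le> z" "w' \<le> w" "w \<le> a" "a \<le> s" "s \<le> y" "y \<le> y'"
      "w' \<le> x'" "w \<le> x" "a \<le> c" "c \<le> b" "y \<le> z"
    and not_le: "\<not> y \<le> b" "\<not> c \<le> y" "\<not> y' \<le> z" "\<not> x \<le> w" "\<not> w \<le> x'" "\<not> x' \<le> w'"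
      "\<not> x \<le> c" "\<not> a \<le> x" "\<not> s \<le> b"
    and rungs: "sup b y = z" "inf z y' = y" "sup x' w = x" "sup x a = b"
      "inf x a = w" "inf b y = a" "inf x y' = w" "inf x' y = w'"
begin

lemma doubly_reducible_if_inf_x_c_le_w:
  assumes "inf x c \<le> w"
  shows "doubly_reducible (sup y (inf b (sup y' c)))"
proof (rule doubly_reducibleI)
  show "incomparable y (inf b (sup y' c))"
    using le not_le(1,2) unfolding incomparable_def
    by (meson inf.boundedE le_infI order_trans sup.cobounded2)
  have "inf x (sup y' c) \<le> w"
    using le rungs assms by (intro N5_var_meet_semidistrib_above[OF N5]) order+
  then have "\<not> x \<le> sup y' c"
    using not_le(4) by (metis inf_absorb1)
  then show "incomparable z (sup y' c)"
    using le not_le(3) unfolding incomparable_def by (meson order_trans sup.cobounded1)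
  have "inf z (sup y' c) \<le> sup y (inf b (sup y' c))"
    using N5_var_weak_modular_join[OF N5, of y y' c b] le rungs by simp
  moreover have "sup y (inf b (sup y' c)) \<le> inf z (sup y' c)"
    using le by (simp add: le_supI1 inf.coboundedI1)
  ultimately show "sup y (inf b (sup y' c)) = inf z (sup y' c)"
    by (rule order.antisym[symmetric])
qed

lemma inf_x'_w: "inf x' w = w'"
proof (rule order.antisym)
  show "inf x' w \<le> w'"
  proof -
    have "w \<le> y" using le by order
    then have "inf x' w \<le> inf x' y" by (rule inf_mono[OF order_refl])
    then show ?thesis using rungs(8) by simp
  qed
  show "w' \<le> inf x' w"
    using le by simp
qed

lemma doubly_reducible_if_x_le_sup_s_c:
  assumes "x \<le> sup s c"
  shows "doubly_reducible (sup w (inf x' c))"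
proof (rule doubly_reducibleI)
  have "\<not> inf x' c \<le> w"
  proof
    assume "inf x' c \<le> w"
    then have "inf x' c \<le> inf x' w" by simp
    then have "inf x' c \<le> w'" using inf_x'_w by simp
    moreover have "inf x' s \<le> inf x' y"
      using le(7) by (rule inf_mono[OF order_refl])
    ultimately have "inf x' (sup s c) \<le> w'"
      using le rungs(8) by (intro N5_var_meet_semidistrib_above[OF N5]) (order | simp)+
    moreover have "x' \<le> sup s c"
      using le assms by order
    ultimately show False
      using not_le(6) by (simp add: inf_absorb1)
  qed
  then show "incomparable w (inf x' c)"
    using not_le(5) unfolding incomparable_def by simp
  have "sup a (inf x' c) \<le> c" using le by simp
  then show "incomparable x (sup a (inf x' c))"
    using not_le(7,8) unfolding incomparable_def by (meson le_supE order_trans)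
  have "inf x (sup a (inf x' c)) \<le> sup w (inf x' c)"
    using N5_var_weak_modular_meet[OF N5, of w a c x'] le rungs by simp
  moreover have "sup w (inf x' c) \<le> inf x (sup a (inf x' c))"
    using le by (simp add: le_supI1 le_infI1)
  ultimately show "sup w (inf x' c) = inf x (sup a (inf x' c))"
    by (rule order.antisym[symmetric])
qed

lemma doubly_reducible_otherwise:
  assumes "\<not> inf x c \<le> w" "\<not> x \<le> sup s c"
  shows "doubly_reducible (sup a (inf x (sup s c)))"
proof (rule doubly_reducibleI)
  have inf_b_s: "inf b s = a"
  proof (rule order.antisym)
    have "inf b s \<le> inf b y"
      using le(7) by (rule inf_mono[OF order_refl])
    then show "inf b s \<le> a" using rungs(6) by simp
    show "a \<le> inf b s" using le by simp
  qed
  have "\<not> inf x (sup s c) \<le> a"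
  proof
    assume "inf x (sup s c) \<le> a"
    moreover have "inf x c \<le> inf x (sup s c)"
      by (simp add: inf.coboundedI2 le_supI2)
    ultimately have "inf x c \<le> inf x a"
      by (meson inf.cobounded1 le_inf_iff order_trans)
    then show False using assms(1) rungs(5) by simp
  qed
  then show "incomparable a (inf x (sup s c))"
    using not_le(8) unfolding incomparable_def by simp
  have "\<not> b \<le> sup s (inf x c)"
  proof
    assume "b \<le> sup s (inf x c)"
    moreover have "sup s (inf x c) \<le> sup s c" by (simp add: le_supI2)
    ultimately show False using assms(2) le(2) by order
  qed
  then show "incomparable b (sup s (inf x c))"
    using not_le(9) unfolding incomparable_def by simp
  have "inf b (sup s (inf x c)) \<le> sup a (inf x (sup s c))"
    using N5_var_weak_modular_decomp[OF N5, of x b s c] inf_b_s rungs(4) by simp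
  moreover have "sup a (inf x (sup s c)) \<le> inf b (sup s (inf x c))"
    using N5_var_weak_distrib[OF N5, of x b s c] inf_b_s le by simp
  ultimately show "sup a (inf x (sup s c)) = inf b (sup s (inf x c))"
    by (rule order.antisym[symmetric])
qed

lemma ex_doubly_reducible: "\<exists>e :: 'a. doubly_reducible e"
  using doubly_reducible_if_inf_x_c_le_w doubly_reducible_if_x_le_sup_s_c
    doubly_reducible_otherwise by blast

end

definition P12_strictly_below :: "nat \<Rightarrow> nat set" where
  "P12_strictly_below j = set ([[5], [0,5,6], [0,1,5,6,7,11], [0,1,2,5,6,7,8,9,11],
     [0,1,2,3,5,6,7,8,9,10,11], [], [5], [5,6], [5,6,7], [5,6,7,8], [5,6,7,8,9], [5,6,7]] ! j)"

lemma P12_le_imp_strictly_below: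
  assumes "P12_le i j"
  shows "i = j \<or> i \<in> P12_strictly_below j"
  using assms unfolding P12_le_def
proof (induction rule: rtrancl_induct)
  case (step j k)
  have "j \<in> P12_strictly_below k \<and> P12_strictly_below j \<subseteq> P12_strictly_below k"
    using step.hyps(2) unfolding P12_gen_def
    by (elim insertE emptyE; simp add: P12_strictly_below_def)
  with step.IH show ?case by blast
qed simp

lemma N5_ladder_if_embedding:
  fixes x' x b z z' w' w a s y y' c :: "'a::lattice"
  assumes N5: "in_var_N5 TYPE('a)"
    and order: "\<forall>i<12. \<forall>j<12. [x', x, b, z, z', w', w, a, s, y, y', c] ! i
                   \<le> [x', x, b, z, z', w', w, a, s, y, y', c] ! j \<longleftrightarrow> P12_le i j"
    and hom: "\<forall>p\<in>two_by_five. \<forall>q\<in>two_by_five.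
           h (max (fst p) (fst q), max (snd p) (snd q)) = sup (h p) (h q) \<and>
           h (min (fst p) (fst q), min (snd p) (snd q)) = inf (h p) (h q)"
    and h: "h = (\<lambda>(i, j). if i = 0 then [w', w, a, y, y'] ! j else [x', x, b, z, z'] ! j)"
  shows "N5_ladder x' x b z w' w a s y y' c"
proof -
  let ?L = "[x', x, b, z, z', w', w, a, s, y, y', c]"
  have le: "?L ! i \<le> ?L ! j" if "(i, j) \<in> P12_gen" for i j
  proof -
    have "i < 12" "j < 12" using that by (auto simp: P12_gen_def)
    with that show ?thesis
      using order unfolding P12_le_def by blast
  qed
  have not_le: "\<not> ?L ! i \<le> ?L ! j"
    if "i < 12" "j < 12" "i \<noteq> j" "i \<notin> P12_strictly_below j" for i j
    using order that P12_le_imp_strictly_below by blast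
  have sup: "h (max i k, max j l) = sup (h (i, j)) (h (k, l))"
   and inf: "h (min i k, min j l) = inf (h (i, j)) (h (k, l))"
    if "i \<le> 1" "j \<le> 4" "k \<le> 1" "l \<le> 4" for i j k l
    using hom that unfolding two_by_five_def by fastforce+
  show ?thesis
  proof
    show "in_var_N5 TYPE('a)" by (fact N5)
    show "x' \<le> x" "x \<le> b" "b \<le> z" "w' \<le> w" "w \<le> a" "a \<le> s" "s \<le> y" "y \<le> y'"
      "w' \<le> x'" "w \<le> x" "a \<le> c" "c \<le> b" "y \<le> z"
      using le[of 0 1] le[of 1 2] le[of 2 3] le[of 5 6] le[of 6 7] le[of 7 8] le[of 8 9] le[of 9 10]
        le[of 5 0] le[of 6 1] le[of 7 11] le[of 11 2] le[of 9 3]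
      by (simp_all add: P12_gen_def)
    show "\<not> y \<le> b" "\<not> c \<le> y" "\<not> y' \<le> z" "\<not> x \<le> w" "\<not> w \<le> x'" "\<not> x' \<le> w'"
      "\<not> x \<le> c" "\<not> a \<le> x" "\<not> s \<le> b"
      using not_le[of 9 2] not_le[of 11 9] not_le[of 10 3] not_le[of 1 6] not_le[of 6 0]
        not_le[of 0 5] not_le[of 1 11] not_le[of 7 1] not_le[of 8 2]
      by (simp_all add: P12_strictly_below_def)
    show "sup b y = z" "inf z y' = y" "sup x' w = x" "sup x a = b"
      "inf x a = w" "inf b y = a" "inf x y' = w" "inf x' y = w'"
      using sup[of 1 2 0 3] inf[of 1 3 0 4] sup[of 1 0 0 1] sup[of 1 1 0 2]
        inf[of 1 1 0 2] inf[of 1 2 0 3] inf[of 1 1 0 4] inf[of 1 0 0 3]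
      by (simp_all add: h)
  qed
qed

theorem lemma5p3:
  assumes "in_var_N5 TYPE('a::lattice)"
    and "\<not> (\<exists>e::'a. doubly_reducible e)"
  shows "\<not> (\<exists>x' x b z z' w' w a s y y' c :: 'a.
     distinct [x', x, b, z, z', w', w, a, s, y, y', c] \<and>
     (\<forall>i<12. \<forall>j<12. [x', x, b, z, z', w', w, a, s, y, y', c] ! i
                         \<le> [x', x, b, z, z', w', w, a, s, y, y', c] ! j \<longleftrightarrow> P12_le i j) \<and>
     (let h = (\<lambda>(i, j). if i = 0 then [w', w, a, y, y'] ! j else [x', x, b, z, z'] ! j) in
        lat_gen {x', x, b, z, z', w', w, a, y, y'} = h ` two_by_five \<and>
        inj_on h two_by_five \<and>
        (\<forall>p\<in>two_by_five. \<forall>q\<in>two_by_five.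
           h (max (fst p) (fst q), max (snd p) (snd q)) = sup (h p) (h q) \<and>
           h (min (fst p) (fst q), min (snd p) (snd q)) = inf (h p) (h q))))"
proof (intro notI, elim exE conjE)
  fix x' x b z z' w' w a s y y' c :: 'a
  assume order: "\<forall>i<12. \<forall>j<12. [x', x, b, z, z', w', w, a, s, y, y', c] ! i
                         \<le> [x', x, b, z, z', w', w, a, s, y, y', c] ! j \<longleftrightarrow> P12_le i j"
    and "let h = (\<lambda>(i, j). if i = 0 then [w', w, a, y, y'] ! j else [x', x, b, z, z'] ! j) in
        lat_gen {x', x, b, z, z', w', w, a, y, y'} = h ` two_by_five \<and>
        inj_on h two_by_five \<and>
        (\<forall>p\<in>two_by_five. \<forall>q\<in>two_by_five.
           h (max (fst p) (fst q), max (snd p) (snd q)) = sup (h p) (h q) \<and>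
           h (min (fst p) (fst q), min (snd p) (snd q)) = inf (h p) (h q))"
  then have "N5_ladder x' x b z w' w a s y y' c"
    unfolding Let_def by (intro N5_ladder_if_embedding[OF assms(1) order _ refl]) blast
  then show False
    using assms(2) N5_ladder.ex_doubly_reducible by blast
qed

end
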